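(* A linear operator $Q:P\to P$ is a $\partial_\psi$-delta operator if and only if there exists an invertible $S\in\Sigma_\psi$ (with $S^{-1}\in\Sigma_\psi$) such that $Q=\partial_\psi S$.
   Context: Let $F$ be a field of characteristic $0$, $P=F[x]$. Fix $(\psi_n)_{n\ge0}$ in $F$ with $\psi_0=1$, $\psi_n\ne0$, $\psi_{-1}=0$; $n_\psi=\psi_{n-1}/\psi_n$, $n_\psi!=1/\psi_n$, $0_\psi!=1$. $\partial_\psi x^n=n_\psi x^{n-1}$ (linear); $E^a(\partial_\psi)=\sum_k\frac{a^k}{k_\psi!}\partial_\psi^k$. $\Sigma_\psi$ is the algebra of linear $T:P\to P$ commuting with all $E^a(\partial_\psi)$, $a\in F$. A $\partial_\psi$-delta operator is $Q\in\Sigma_\psi$ with $Q(x)$ a nonzero constant. *)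

theory Defs
  imports "HOL-Computational_Algebra.Polynomial"
begin

definition npsi :: "(nat \<Rightarrow> 'a::field) \<Rightarrow> nat \<Rightarrow> 'a" where
  "npsi psi n = (if n = 0 then 0 else psi (n - 1) / psi n)"

definition dpsi :: "(nat \<Rightarrow> 'a::field) \<Rightarrow> 'a poly \<Rightarrow> 'a poly" where
  "dpsi psi p = (\<Sum>n\<le>degree p. monom (coeff p n * npsi psi n) (n - 1))"

text \<open>E^a(d_psi) = sum_k a^k / k_psi! d_psi^k, with 1/k_psi! = psi k;
  on a polynomial p the terms with k > degree p vanish.\<close>
definition Epsi :: "(nat \<Rightarrow> 'a::field) \<Rightarrow> 'a \<Rightarrow> 'a poly \<Rightarrow> 'a poly" where
  "Epsi psi a p = (\<Sum>k\<le>degree p. smult (a ^ k * psi k) ((dpsi psi ^^ k) p))"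

definition flinear :: "('a::field poly \<Rightarrow> 'a poly) \<Rightarrow> bool" where
  "flinear T \<longleftrightarrow> (\<forall>p q. T (p + q) = T p + T q) \<and> (\<forall>c p. T (smult c p) = smult c (T p))"

definition Sigma_psi :: "(nat \<Rightarrow> 'a::field) \<Rightarrow> ('a poly \<Rightarrow> 'a poly) set" where
  "Sigma_psi psi = {T. flinear T \<and> (\<forall>a. T \<circ> Epsi psi a = Epsi psi a \<circ> T)}"

definition delta_op :: "(nat \<Rightarrow> 'a::field) \<Rightarrow> ('a poly \<Rightarrow> 'a poly) \<Rightarrow> bool" where
  "delta_op psi Q \<longleftrightarrow> Q \<in> Sigma_psi psi \<and> (\<exists>c. c \<noteq> 0 \<and> Q [:0, 1:] = [:c:])"

end

theory Submission
  imports Defs "HOL-Computational_Algebra.Formal_Power_Series"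
begin

text \<open>An operator T commuting with every E^a(D), D the psi-derivative, commutes with D
  itself, since D is the coefficient of a in E^a(D). An operator commuting with D is
  determined by the constant terms of its values on the basis x^n/n_psi!, which D shifts
  down, so it is a power series f(D) = \<Sum> f_k D^k; and f \<mapsto> f(D) is an injective ring
  homomorphism from F[[t]] onto Sigma_psi. As f(D) x = f_0 x + f_1/1_psi, f(D) is a delta
  operator iff f_0 = 0 and f_1 \<noteq> 0, i.e. iff f = t g with g a unit of F[[t]]; then
  S = g(D) and S' = (inverse g)(D).\<close>

unbundle fps_syntax

lemma smult_sum_right: "smult c (sum g A) = (\<Sum>x\<in>A. smult c (g x))"
  by (induction A rule: infinite_finite_induct) (auto simp: smult_add_right)

lemma flinear_add: "flinear T \<Longrightarrow> T (p + q) = T p + T q"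
  by (simp add: flinear_def)

lemma flinear_smult: "flinear T \<Longrightarrow> T (smult c p) = smult c (T p)"
  by (simp add: flinear_def)

lemma flinear_zero: "flinear T \<Longrightarrow> T 0 = 0"
  using flinear_smult[of T 0 0] by simp

lemma flinear_diff: "flinear T \<Longrightarrow> T (p - q) = T p - T q"
  using flinear_add[of T "p - q" q] by (simp add: algebra_simps)

lemma flinear_sum: "flinear T \<Longrightarrow> T (sum g A) = (\<Sum>x\<in>A. T (g x))"
  by (induction A rule: infinite_finite_induct) (auto simp: flinear_zero flinear_add)

lemma flinear_comp: "flinear S \<Longrightarrow> flinear T \<Longrightarrow> flinear (S \<circ> T)"
  by (simp add: flinear_def)

lemma flinear_funpow: "flinear T \<Longrightarrow> flinear (T ^^ k)"
  by (induction k) (auto simp: flinear_def flinear_comp)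

lemma coeff_dpsi: "coeff (dpsi psi p) n = coeff p (Suc n) * psi n / psi (Suc n)"
proof -
  have "coeff (dpsi psi p) n = (\<Sum>m\<le>degree p. if m - 1 = n then coeff p m * npsi psi m else 0)"
    by (simp add: dpsi_def coeff_sum coeff_monom)
  also have "\<dots> = (\<Sum>m\<in>{Suc n} \<inter> {..degree p}. coeff p m * npsi psi m)"
    by (rule sum.mono_neutral_cong_right) (auto simp: npsi_def)
  also have "\<dots> = coeff p (Suc n) * psi n / psi (Suc n)"
    by (cases "Suc n \<le> degree p") (auto simp: npsi_def coeff_eq_0)
  finally show ?thesis .
qed

lemma flinear_dpsi: "flinear (dpsi psi)"
  unfolding flinear_def by (auto simp: poly_eq_iff coeff_dpsi algebra_simps add_divide_distrib)

lemma degree_dpsi_le: "degree (dpsi psi p) \<le> degree p"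
  by (rule degree_le) (auto simp: coeff_dpsi coeff_eq_0)

text \<open>This is where characteristic 0 (infinitely many values of a) is needed.\<close>
lemma sum_smult_powers_eq_0:
  fixes p :: "nat \<Rightarrow> 'a::{idom,ring_char_0} poly"
  assumes vanish: "\<And>a. (\<Sum>k\<le>N. smult (a ^ k) (p k)) = 0" and "k \<le> N"
  shows "p k = 0"
proof (rule poly_eqI)
  fix j
  define r where "r = (\<Sum>i\<le>N. monom (coeff (p i) j) i)"
  have "poly r a = coeff (\<Sum>i\<le>N. smult (a ^ i) (p i)) j" for a
    by (simp add: r_def poly_sum poly_monom coeff_sum mult.commute)
  then have "r = 0"
    by (simp add: vanish flip: poly_all_0_iff_0)
  moreover have "coeff r k = coeff (p k) j"
    using \<open>k \<le> N\<close> by (simp add: r_def coeff_sum coeff_monom)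
  ultimately show "coeff (p k) j = coeff 0 j" by simp
qed

locale psi_sequence =
  fixes psi :: "nat \<Rightarrow> 'a::field_char_0"
  assumes psi_nonzero: "psi n \<noteq> 0" and psi_0: "psi 0 = 1"
begin

abbreviation D :: "'a poly \<Rightarrow> 'a poly" where "D \<equiv> dpsi psi"

lemma coeff_dpsi_funpow: "coeff ((D ^^ k) p) n = coeff p (n + k) * psi n / psi (n + k)"
proof (induction k arbitrary: n)
  case 0
  then show ?case using psi_nonzero by simp
next
  case (Suc k)
  then show ?case using psi_nonzero[of "Suc n"] by (simp add: coeff_dpsi)
qed

lemma dpsi_funpow_eq_0: "degree p < k \<Longrightarrow> (D ^^ k) p = 0"
  by (simp add: poly_eq_iff coeff_dpsi_funpow coeff_eq_0)

lemma dpsi_eq_0_imp_const: "D p = 0 \<Longrightarrow> p = [:coeff p 0:]"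
proof -
  assume "D p = 0"
  have "coeff p (Suc n) = 0" for n
  proof -
    have "coeff (D p) n = 0" using \<open>D p = 0\<close> by simp
    then show ?thesis using psi_nonzero[of n] psi_nonzero[of "Suc n"] by (simp add: coeff_dpsi)
  qed
  then show ?thesis by (auto simp: poly_eq_iff coeff_pCons split: nat.split)
qed

lemma dpsi_x: "D [:0, 1:] = [:1 / psi 1:]"
  by (auto simp: poly_eq_iff coeff_dpsi psi_0 coeff_pCons split: nat.split)

definition dpsi_series :: "'a fps \<Rightarrow> 'a poly \<Rightarrow> 'a poly" where
  "dpsi_series f p = (\<Sum>k\<le>degree p. smult (f $ k) ((D ^^ k) p))"

lemma dpsi_series_eq_sum:
  assumes "degree p \<le> N"
  shows "dpsi_series f p = (\<Sum>k\<le>N. smult (f $ k) ((D ^^ k) p))"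
  unfolding dpsi_series_def
  by (rule sum.mono_neutral_left) (use assms in \<open>auto simp: dpsi_funpow_eq_0\<close>)

lemma Epsi_eq_dpsi_series: "Epsi psi a = dpsi_series (Abs_fps (\<lambda>k. a ^ k * psi k))"
  by (auto simp: Epsi_def dpsi_series_def fun_eq_iff)

lemma flinear_dpsi_series: "flinear (dpsi_series f)"
proof -
  have lin: "flinear (D ^^ k)" for k
    by (rule flinear_funpow[OF flinear_dpsi])
  have "dpsi_series f (p + q) = dpsi_series f p + dpsi_series f q" for p q
  proof -
    let ?N = "max (degree p) (degree q)"
    have "degree (p + q) \<le> ?N" by (rule degree_add_le) auto
    then show ?thesis
      using dpsi_series_eq_sum[of p ?N f] dpsi_series_eq_sum[of q ?N f]
        dpsi_series_eq_sum[of "p + q" ?N f]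
      by (simp add: flinear_add[OF lin] sum.distrib smult_add_right)
  qed
  moreover have "dpsi_series f (smult c p) = smult c (dpsi_series f p)" for c p
    using dpsi_series_eq_sum[of p "degree p" f] dpsi_series_eq_sum[of "smult c p" "degree p" f]
    by (simp add: flinear_smult[OF lin] smult_sum_right mult.commute)
  ultimately show ?thesis by (simp add: flinear_def)
qed

lemma dpsi_series_dpsi: "dpsi_series f (D p) = D (dpsi_series f p)"
proof -
  have "dpsi_series f (D p) = (\<Sum>k\<le>degree p. smult (f $ k) ((D ^^ k) (D p)))"
    by (rule dpsi_series_eq_sum[OF degree_dpsi_le])
  also have "\<dots> = D (dpsi_series f p)"
    by (simp add: dpsi_series_def flinear_sum[OF flinear_dpsi] flinear_smult[OF flinear_dpsi]
        funpow_swap1)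
  finally show ?thesis .
qed

lemma dpsi_series_one: "dpsi_series 1 = id"
proof
  fix p
  have "dpsi_series 1 p = (\<Sum>k\<le>degree p. if k = 0 then p else 0)"
    unfolding dpsi_series_def by (rule sum.cong) auto
  then show "dpsi_series 1 p = id p" by simp
qed

lemma dpsi_series_X: "dpsi_series fps_X = D"
proof
  fix p
  have "dpsi_series fps_X p = (\<Sum>k\<le>Suc (degree p). smult (fps_X $ k) ((D ^^ k) p))"
    by (rule dpsi_series_eq_sum) simp
  also have "\<dots> = (\<Sum>k\<le>Suc (degree p). if k = 1 then D p else 0)"
    by (rule sum.cong) auto
  finally show "dpsi_series fps_X p = D p" by simp
qed

lemma dpsi_series_x: "dpsi_series f [:0, 1:] = [:f $ 1 / psi 1, f $ 0:]"
  using dpsi_series_eq_sum[of "[:0, 1:]" 1 f] by (simp add: dpsi_x)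

text \<open>The basis x^n/n_psi!, on which D acts as a shift.\<close>
definition psi_monom :: "nat \<Rightarrow> 'a poly" where
  "psi_monom n = monom (psi n) n"

lemma coeff_psi_monom: "coeff (psi_monom n) k = (if k = n then psi n else 0)"
  by (simp add: psi_monom_def coeff_monom)

lemma dpsi_psi_monom: "D (psi_monom n) = (case n of 0 \<Rightarrow> 0 | Suc m \<Rightarrow> psi_monom m)"
  by (cases n) (auto simp: poly_eq_iff coeff_dpsi coeff_psi_monom psi_nonzero)

lemma poly_eq_sum_psi_monom: "p = (\<Sum>n\<le>degree p. smult (coeff p n / psi n) (psi_monom n))"
proof (rule poly_eqI)
  fix n
  have "coeff (\<Sum>m\<le>degree p. smult (coeff p m / psi m) (psi_monom m)) n
      = (\<Sum>m\<le>degree p. if m = n then coeff p n else 0)"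
    unfolding coeff_sum by (rule sum.cong) (auto simp: coeff_psi_monom psi_nonzero)
  also have "\<dots> = coeff p n"
    by (simp add: coeff_eq_0)
  finally show "coeff p n = coeff (\<Sum>m\<le>degree p. smult (coeff p m / psi m) (psi_monom m)) n"
    by simp
qed

lemma coeff_dpsi_series_psi_monom:
  "coeff (dpsi_series f (psi_monom n)) k = (if k \<le> n then f $ (n - k) * psi k else 0)"
proof -
  have "degree (psi_monom n) \<le> n"
    by (simp add: psi_monom_def degree_monom_le)
  then have "coeff (dpsi_series f (psi_monom n)) k
      = (\<Sum>j\<le>n. f $ j * coeff (psi_monom n) (k + j) * psi k / psi (k + j))"
    by (simp add: dpsi_series_eq_sum coeff_sum coeff_dpsi_funpow mult.assoc)
  also have "\<dots> = (\<Sum>j\<le>n. if j = n - k \<and> k \<le> n then f $ (n - k) * psi k else 0)"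
    by (rule sum.cong) (auto simp: coeff_psi_monom psi_nonzero)
  also have "\<dots> = (if k \<le> n then f $ (n - k) * psi k else 0)"
    by (cases "k \<le> n") (simp_all add: sum.delta')
  finally show ?thesis .
qed

text \<open>Kernel of D = constants, so by induction along the shift D (psi_monom (n+1)) =
  psi_monom n the values on the basis are fixed by their constant terms.\<close>
lemma dpsi_commuting_eqI:
  assumes lin: "flinear T" "flinear T'"
    and comm: "\<And>p. T (D p) = D (T p)" "\<And>p. T' (D p) = D (T' p)"
    and const: "\<And>n. coeff (T (psi_monom n)) 0 = coeff (T' (psi_monom n)) 0"
  shows "T = T'"
proof
  have on_basis: "T (psi_monom n) = T' (psi_monom n)" for n
  proof (induction n)
    case 0
    have "D (T (psi_monom 0) - T' (psi_monom 0)) = 0"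
      by (simp add: flinear_diff[OF flinear_dpsi] flinear_zero lin dpsi_psi_monom flip: comm)
    then show ?case
      using dpsi_eq_0_imp_const const[of 0] by fastforce
  next
    case (Suc n)
    have "D (T (psi_monom (Suc n)) - T' (psi_monom (Suc n))) = 0"
      by (simp add: flinear_diff[OF flinear_dpsi] dpsi_psi_monom Suc flip: comm)
    then show ?case
      using dpsi_eq_0_imp_const const[of "Suc n"] by fastforce
  qed
  fix p
  show "T p = T' p"
    by (subst (1 2) poly_eq_sum_psi_monom)
      (simp add: flinear_sum flinear_smult lin on_basis)
qed

definition dpsi_symbol :: "('a poly \<Rightarrow> 'a poly) \<Rightarrow> 'a fps" where
  "dpsi_symbol T = Abs_fps (\<lambda>n. coeff (T (psi_monom n)) 0)"

lemma dpsi_symbol_dpsi_series [simp]: "dpsi_symbol (dpsi_series f) = f"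
  by (simp add: dpsi_symbol_def coeff_dpsi_series_psi_monom psi_0 fps_nth_inverse)

lemma dpsi_series_inject: "dpsi_series f = dpsi_series g \<longleftrightarrow> f = g"
  by (metis dpsi_symbol_dpsi_series)

lemma dpsi_series_dpsi_symbol:
  assumes "flinear T" and "\<And>p. T (D p) = D (T p)"
  shows "T = dpsi_series (dpsi_symbol T)"
  by (rule dpsi_commuting_eqI)
    (simp_all add: assms flinear_dpsi_series dpsi_series_dpsi dpsi_symbol_def
      coeff_dpsi_series_psi_monom psi_0)

lemma dpsi_series_mult: "dpsi_series f \<circ> dpsi_series g = dpsi_series (f * g)"
proof (rule dpsi_commuting_eqI)
  fix n
  have "degree (dpsi_series g (psi_monom n)) \<le> n"
    by (rule degree_le) (simp add: coeff_dpsi_series_psi_monom)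
  then have "coeff (dpsi_series f (dpsi_series g (psi_monom n))) 0
      = (\<Sum>k\<le>n. f $ k * coeff (dpsi_series g (psi_monom n)) k / psi k)"
    by (simp add: dpsi_series_eq_sum coeff_sum coeff_dpsi_funpow psi_0)
  also have "\<dots> = (\<Sum>k\<le>n. f $ k * g $ (n - k))"
    by (rule sum.cong) (auto simp: coeff_dpsi_series_psi_monom psi_nonzero)
  also have "\<dots> = coeff (dpsi_series (f * g) (psi_monom n)) 0"
    by (simp add: coeff_dpsi_series_psi_monom fps_mult_nth atLeast0AtMost psi_0)
  finally show "coeff ((dpsi_series f \<circ> dpsi_series g) (psi_monom n)) 0
      = coeff (dpsi_series (f * g) (psi_monom n)) 0"
    by simp
qed (simp_all add: flinear_comp flinear_dpsi_series dpsi_series_dpsi)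

lemma dpsi_series_comp_eq_id_iff: "dpsi_series f \<circ> dpsi_series g = id \<longleftrightarrow> f * g = 1"
  by (simp add: dpsi_series_mult dpsi_series_inject flip: dpsi_series_one)

lemma dpsi_series_in_Sigma_psi: "dpsi_series f \<in> Sigma_psi psi"
  by (auto simp: Sigma_psi_def flinear_dpsi_series Epsi_eq_dpsi_series dpsi_series_mult
      mult.commute)

lemma Sigma_psi_commute_dpsi:
  assumes "T \<in> Sigma_psi psi"
  shows "T (D p) = D (T p)"
proof -
  have lin: "flinear T" and comm: "\<And>a q. T (Epsi psi a q) = Epsi psi a (T q)"
    using assms by (auto simp: Sigma_psi_def fun_eq_iff)
  define N where "N = Suc (max (degree p) (degree (T p)))"
  define E where "E k = T ((D ^^ k) p) - (D ^^ k) (T p)" for k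
  have Epsi_sum: "Epsi psi a q = (\<Sum>k\<le>N. smult (a ^ k) (smult (psi k) ((D ^^ k) q)))"
    if "degree q \<le> N" for a q
    using that by (simp add: Epsi_eq_dpsi_series dpsi_series_eq_sum[of q N] mult.commute)
  have "degree p \<le> N" "degree (T p) \<le> N"
    by (simp_all add: N_def)
  then have "(\<Sum>k\<le>N. smult (a ^ k) (smult (psi k) (E k))) = 0" for a
    using comm[of a p] Epsi_sum[of p a] Epsi_sum[of "T p" a]
    by (simp add: E_def flinear_sum[OF lin] flinear_smult[OF lin] smult_diff_right
        sum_subtractf)
  then have "smult (psi 1) (E 1) = 0"
    by (rule sum_smult_powers_eq_0) (simp add: N_def)
  then show ?thesis
    using psi_nonzero[of 1] by (simp add: E_def)
qed

lemma Sigma_psi_eq_range_dpsi_series: "Sigma_psi psi = range dpsi_series"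
proof
  show "Sigma_psi psi \<subseteq> range dpsi_series"
  proof
    fix T
    assume "T \<in> Sigma_psi psi"
    then have "T = dpsi_series (dpsi_symbol T)"
      by (intro dpsi_series_dpsi_symbol Sigma_psi_commute_dpsi) (simp add: Sigma_psi_def)
    then show "T \<in> range dpsi_series" by blast
  qed
qed (auto simp: dpsi_series_in_Sigma_psi)

lemma delta_op_dpsi_series_iff: "delta_op psi (dpsi_series f) \<longleftrightarrow> f $ 0 = 0 \<and> f $ 1 \<noteq> 0"
  by (auto simp: delta_op_def dpsi_series_in_Sigma_psi dpsi_series_x psi_nonzero)

end

theorem mainTheorem10:
  fixes psi :: "nat \<Rightarrow> 'a::field_char_0" and Q :: "'a poly \<Rightarrow> 'a poly"
  assumes "psi 0 = 1" and "\<forall>n. psi n \<noteq> 0" and "flinear Q"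
  shows "delta_op psi Q \<longleftrightarrow>
    (\<exists>S S'. S \<in> Sigma_psi psi \<and> S' \<in> Sigma_psi psi \<and> S \<circ> S' = id \<and> S' \<circ> S = id
       \<and> Q = dpsi psi \<circ> S)"
proof -
  interpret psi_sequence psi
    using assms(1,2) by unfold_locales auto
  show ?thesis
  proof
    assume "delta_op psi Q"
    then obtain f where Q: "Q = dpsi_series f" and "f $ 0 = 0" and "f $ 1 \<noteq> 0"
      using Sigma_psi_eq_range_dpsi_series delta_op_dpsi_series_iff
      by (auto simp: delta_op_def)
    define g where "g = fps_shift 1 f"
    have "f = fps_X * g" and g0: "g $ 0 \<noteq> 0"
      using \<open>f $ 0 = 0\<close> \<open>f $ 1 \<noteq> 0\<close> by (auto intro: fps_ext simp: g_def)
    then have "Q = D \<circ> dpsi_series g"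
      by (simp add: Q dpsi_series_mult flip: dpsi_series_X)
    with g0 show "\<exists>S S'. S \<in> Sigma_psi psi \<and> S' \<in> Sigma_psi psi \<and> S \<circ> S' = id
        \<and> S' \<circ> S = id \<and> Q = D \<circ> S"
      by (intro exI[of _ "dpsi_series g"] exI[of _ "dpsi_series (inverse g)"])
        (simp add: dpsi_series_in_Sigma_psi dpsi_series_comp_eq_id_iff inverse_mult_eq_1
          inverse_mult_eq_1')
  next
    assume "\<exists>S S'. S \<in> Sigma_psi psi \<and> S' \<in> Sigma_psi psi \<and> S \<circ> S' = id
        \<and> S' \<circ> S = id \<and> Q = D \<circ> S"
    then obtain g g' where inv: "dpsi_series g' \<circ> dpsi_series g = id"
      and "Q = D \<circ> dpsi_series g"
      by (auto simp: Sigma_psi_eq_range_dpsi_series)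
    then have "Q = dpsi_series (fps_X * g)"
      by (simp add: dpsi_series_mult flip: dpsi_series_X)
    moreover have "g' * g = 1"
      using inv by (simp only: dpsi_series_comp_eq_id_iff)
    ultimately show "delta_op psi Q"
      by (auto simp: delta_op_dpsi_series_iff dest: arg_cong[of _ _ "\<lambda>h. h $ 0"])
  qed
qed

end
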